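(* Let $p$ be an odd prime, $h(t)\in\Lambda_p$ irreducible with $\mathrm{br}\,h=n\ge1$, and $\mathbb X=(\mathbb F(p,h(t)),* )$. For $m\ge1$ let $p_m(t)=\sum_{j=0}^{m-1}t^j$ and $H_m(t)=1-t^m$. Then: (1) $\mathbb X$ is trivial (i.e. $a*b=a$ for all $a,b$) if and only if $h(t)\doteq t-1$. (2) If $\mathbb X$ is non-trivial, then $*^m=*^0$ (i.e. $t_{\mathbb X}$ divides $m$) if and only if $h(t)$ divides $p_m(t)$ in $\Lambda_p$. (3) $H_m(\bar t)=0$ in $\mathbb F(p,h(t))$ if and only if $m$ is a multiple of $t_{\mathbb X}$. (4) If $\mathbb X$ is non-trivial then $t_{\mathbb X}\ge n+1$; moreover $t_{\mathbb X}=n+1$ if and only if $p_{n+1}(t)$ is irreducible in $\mathbb Z_p[t]$ and $h(t)\doteq p_{n+1}(t)$ in $\Lambda_p$, in which case $p_{n+1}(t)$ is irreducible in $\mathbb Z[t]$ and $n+1$ is prime.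
   Context: A quandle is a set with operation $*$ satisfying $a*a=a$, $(a*b)*c=(a*c)*(b*c)$ and bijectivity of $x\mapsto x*b$; $a*^0b=a$, $a*^nb=(a*^{n-1}b)*b$; for a finite quandle the type $t_{\mathbb X}$ is the least $m\ge1$ with $*^m=*^0$. $\Lambda_p=\mathbb Z_p[t,t^{-1}]$; breadth $\mathrm{br}\,f$ = highest minus lowest exponent of nonzero monomials; $f\doteq g$ means $f=at^kg$, $a\in\mathbb Z_p^*$, $k\in\mathbb Z$. $\mathbb F(p,h(t))=\Lambda_p/(h(t))$ (a field with $p^n$ elements), $\bar t$ the class of $t$, and $a*b=\bar ta+(1-\bar t)b$. *)

theory Defs
  imports "HOL-Computational_Algebra.Formal_Laurent_Series"
          "HOL-Computational_Algebra.Polynomial_FPS"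
          "Berlekamp_Zassenhaus.Finite_Field"
begin

text \<open>Laurent polynomials Lambda = R[t,t^-1], realised inside the ring of formal Laurent
  series 'a fls as those series with finitely many nonzero coefficients; t is fls_X.\<close>

definition lpoly :: "'a::comm_ring_1 fls set" where
  "lpoly = {f. finite {n. fls_nth f n \<noteq> 0}}"

definition lp_dvd :: "'a::comm_ring_1 fls \<Rightarrow> 'a fls \<Rightarrow> bool" where
  "lp_dvd g f \<longleftrightarrow> (\<exists>q\<in>lpoly. f = g * q)"

definition lp_unit :: "'a::comm_ring_1 fls \<Rightarrow> bool" where
  "lp_unit u \<longleftrightarrow> u \<in> lpoly \<and> (\<exists>v\<in>lpoly. u * v = 1)"

definition lp_irreducible :: "'a::comm_ring_1 fls \<Rightarrow> bool" where
  "lp_irreducible h \<longleftrightarrow> h \<in> lpoly \<and> h \<noteq> 0 \<and> \<not> lp_unit h \<and>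
     (\<forall>a\<in>lpoly. \<forall>b\<in>lpoly. h = a * b \<longrightarrow> lp_unit a \<or> lp_unit b)"

definition lp_breadth :: "'a::comm_ring_1 fls \<Rightarrow> int" where
  "lp_breadth f = Max {n. fls_nth f n \<noteq> 0} - Min {n. fls_nth f n \<noteq> 0}"

definition lp_assoc :: "'a::field fls \<Rightarrow> 'a fls \<Rightarrow> bool" where
  "lp_assoc f g \<longleftrightarrow> (\<exists>a. a \<noteq> 0 \<and> (\<exists>k::int. f = fls_const a * fls_X_intpow k * g))"

definition lp_of_poly :: "'a::comm_ring_1 poly \<Rightarrow> 'a fls" where
  "lp_of_poly p = fps_to_fls (fps_of_poly p)"

definition pm :: "nat \<Rightarrow> 'a::comm_ring_1 poly" where
  "pm m = (\<Sum>j<m. Polynomial.monom 1 j)"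

definition Hm :: "nat \<Rightarrow> 'a::comm_ring_1 fls" where
  "Hm m = 1 - fls_X ^ m"

text \<open>The Alexander quandle F(p,h) = Lambda/(h), with a*b = t a + (1-t) b.
  Elements of the quotient are represented by elements of Lambda; two representatives
  give the same element of the quotient iff they are congruent modulo h.\<close>
definition lp_cong :: "'a::comm_ring_1 fls \<Rightarrow> 'a fls \<Rightarrow> 'a fls \<Rightarrow> bool" where
  "lp_cong h a b \<longleftrightarrow> lp_dvd h (a - b)"

definition qop :: "'a::comm_ring_1 fls \<Rightarrow> 'a fls \<Rightarrow> 'a fls" where
  "qop a b = fls_X * a + (1 - fls_X) * b"

definition qpow :: "nat \<Rightarrow> 'a::comm_ring_1 fls \<Rightarrow> 'a fls \<Rightarrow> 'a fls" where
  "qpow m a b = ((\<lambda>x. qop x b) ^^ m) a"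

definition quandle_trivial :: "'a::comm_ring_1 fls \<Rightarrow> bool" where
  "quandle_trivial h \<longleftrightarrow> (\<forall>a\<in>lpoly. \<forall>b\<in>lpoly. lp_cong h (qop a b) a)"

definition qpow_id :: "'a::comm_ring_1 fls \<Rightarrow> nat \<Rightarrow> bool" where
  "qpow_id h m \<longleftrightarrow> (\<forall>a\<in>lpoly. \<forall>b\<in>lpoly. lp_cong h (qpow m a b) a)"

definition quandle_type :: "'a::comm_ring_1 fls \<Rightarrow> nat" where
  "quandle_type h = (LEAST m. m \<ge> 1 \<and> qpow_id h m)"

end

theory Submission
  imports Defs
begin

unbundle fps_syntax

(*
  The Alexander quandle F(p,h) = Lambda_p/(h) with a*b = t a + (1 - t) b satisfies
  a *^m b = t^m a + (1 - t^m) b, so *^m = *^0 exactly when h divides t^m - 1 in Lambda_p.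
  Every nonzero Laurent polynomial is t^k H(t) for an ordinary polynomial H with H(0) /= 0,
  and then divisibility by h in Lambda_p is divisibility by H in Z_p[t] (powers of t are
  units in Lambda_p and coprime to H in Z_p[t]).  Hence the type of the quandle is the
  multiplicative order of t modulo H, and the four claims become statements about the
  irreducible polynomial H:
    (1) trivial  <->  H | t - 1;
    (2) t^m - 1 = (t - 1) p_m(t), so for H not dividing t - 1 (H prime) H | t^m - 1 <-> H | p_m;
    (3) H_m = -(t^m - 1);
    (4) H | p_m forces deg H <= m - 1, with equality iff p_m is a scalar multiple of H;
        p_m irreducible forces m prime, and irreducibility of the monic p_m lifts to Z[t].
*)

lemma lp_of_poly_nth:
  "lp_of_poly p $$ n = (if n < 0 then 0 else Polynomial.coeff p (nat n))"
  by (simp add: lp_of_poly_def)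

lemma lp_of_poly_mult:
  "lp_of_poly (p * q) = lp_of_poly p * (lp_of_poly q :: 'a::comm_ring_1 fls)"
  by (simp add: lp_of_poly_def fps_of_poly_mult fls_times_fps_to_fls)

lemma lp_of_poly_diff:
  "lp_of_poly (p - q) = lp_of_poly p - (lp_of_poly q :: 'a::comm_ring_1 fls)"
  by (simp add: lp_of_poly_def fps_of_poly_diff)

lemma lp_of_poly_1 [simp]: "lp_of_poly 1 = (1 :: 'a::comm_ring_1 fls)"
  by (simp add: lp_of_poly_def)

lemma lp_of_poly_const: "lp_of_poly [:c:] = (fls_const c :: 'a::comm_ring_1 fls)"
  by (simp add: lp_of_poly_def fps_of_poly_const)

lemma lp_of_poly_monom:
  "lp_of_poly (Polynomial.monom 1 m) = (fls_X ^ m :: 'a::comm_ring_1 fls)"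
  by (simp add: lp_of_poly_def fps_of_poly_monom' fps_to_fls_power)

lemma lp_of_poly_smult:
  "lp_of_poly (Polynomial.smult c p) = fls_const c * (lp_of_poly p :: 'a::comm_ring_1 fls)"
  using lp_of_poly_mult[of "[:c:]" p] by (simp add: lp_of_poly_const)

lemma lp_of_poly_inject: "lp_of_poly p = (lp_of_poly q :: 'a::comm_ring_1 fls) \<longleftrightarrow> p = q"
  by (auto simp: lp_of_poly_def fps_of_poly_eq_iff)

lemma fls_X_intpow_of_nat: "fls_X_intpow (int n) = (fls_X ^ n :: 'a::comm_ring_1 fls)"
  by (simp add: fls_X_power_conv_shift_1)

lemma lp_of_poly_shift_eq:
  assumes "fls_X_intpow d * lp_of_poly P = (lp_of_poly G :: 'a::comm_ring_1 fls)"
  shows "Polynomial.monom 1 (nat d) * P = Polynomial.monom 1 (nat (- d)) * G"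
proof -
  have "int (nat (- d)) + d = int (nat d)" by simp
  then have "fls_X ^ nat (- d) * fls_X_intpow d = (fls_X_intpow (int (nat d)) :: 'a fls)"
    by (simp only: fls_X_intpow_of_nat[symmetric] fls_X_intpow_times_fls_X_intpow)
  then have clear: "fls_X ^ nat (- d) * fls_X_intpow d = (fls_X ^ nat d :: 'a fls)"
    by (simp only: fls_X_intpow_of_nat)
  have "fls_X ^ nat d * lp_of_poly P = (fls_X ^ nat (- d) * fls_X_intpow d) * lp_of_poly P"
    by (simp only: clear)
  also have "\<dots> = fls_X ^ nat (- d) * lp_of_poly G"
    by (simp only: mult.assoc assms)
  finally have "lp_of_poly (Polynomial.monom 1 (nat d) * P)
      = lp_of_poly (Polynomial.monom 1 (nat (- d)) * G :: 'a poly)"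
    by (simp only: lp_of_poly_mult lp_of_poly_monom)
  then show ?thesis by (simp only: lp_of_poly_inject)
qed

section \<open>The ring of Laurent polynomials\<close>

lemma lpoly_add:
  assumes "f \<in> lpoly" "g \<in> lpoly" shows "f + g \<in> lpoly"
proof -
  have "{n. (f + g) $$ n \<noteq> 0} \<subseteq> {n. f $$ n \<noteq> 0} \<union> {n. g $$ n \<noteq> 0}" by auto
  then show ?thesis using assms unfolding lpoly_def by (auto intro: finite_subset)
qed

lemma lpoly_uminus: "- f \<in> lpoly \<longleftrightarrow> f \<in> lpoly"
  by (simp add: lpoly_def)

lemma lpoly_diff: "f \<in> lpoly \<Longrightarrow> g \<in> lpoly \<Longrightarrow> f - g \<in> lpoly"
  using lpoly_add[of f "- g"] by (simp add: lpoly_uminus)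

lemma lpoly_shift: "fls_shift m f \<in> lpoly \<longleftrightarrow> f \<in> lpoly"
proof -
  have "{n. fls_shift m f $$ n \<noteq> 0} = (\<lambda>n. n - m) ` {n. f $$ n \<noteq> 0}"
    by (auto simp: image_iff) (metis add_diff_cancel_right')
  moreover have "inj (\<lambda>n::int. n - m)" by (rule injI) simp
  ultimately show ?thesis
    unfolding lpoly_def by (simp add: finite_image_iff inj_on_subset[OF _ subset_UNIV])
qed

lemma lpoly_X_intpow_mult: "fls_X_intpow k * f \<in> lpoly \<longleftrightarrow> f \<in> lpoly"
  by (simp add: fls_X_intpow_times_conv_shift lpoly_shift)

lemma lpoly_lp_of_poly: "lp_of_poly p \<in> lpoly"
proof -
  have "{n. lp_of_poly p $$ n \<noteq> 0} \<subseteq> int ` {..degree p}"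
  proof
    fix n assume "n \<in> {n. lp_of_poly p $$ n \<noteq> 0}"
    then have "n \<ge> 0" "Polynomial.coeff p (nat n) \<noteq> 0"
      by (auto simp: lp_of_poly_nth split: if_splits)
    then show "n \<in> int ` {..degree p}"
      using le_degree by (auto intro!: image_eqI[of _ _ "nat n"])
  qed
  then have "finite {n. lp_of_poly p $$ n \<noteq> 0}" by (rule finite_subset) simp
  then show ?thesis by (simp add: lpoly_def)
qed

lemma fps_finite_support_poly:
  assumes "finite {i. F $ i \<noteq> 0}"
  shows "F = fps_of_poly (Abs_poly (\<lambda>i. F $ i))"
proof -
  have "Polynomial.coeff (Abs_poly (\<lambda>i. F $ i)) i = F $ i" for i
    by (subst Abs_poly_inverse) (auto simp: eventually_cofinite assms)
  then show ?thesis by (intro fps_ext) simp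
qed

lemma lpoly_normal_form:
  assumes "f \<in> lpoly"
  shows "\<exists>k G. f = fls_X_intpow k * lp_of_poly G \<and> (f \<noteq> 0 \<longrightarrow> Polynomial.coeff G 0 \<noteq> 0)"
proof -
  define B where "B = fls_base_factor_to_fps f"
  have "{i. B $ i \<noteq> 0} \<subseteq> (\<lambda>n. nat (n - fls_subdegree f)) ` {n. f $$ n \<noteq> 0}"
    by (auto simp: B_def fls_base_factor_to_fps_nth ac_simps
        intro!: image_eqI[of _ _ "fls_subdegree f + int i" for i])
  then have "finite {i. B $ i \<noteq> 0}"
    using assms unfolding lpoly_def by (auto intro: finite_subset)
  then obtain G where BG: "B = fps_of_poly G" using fps_finite_support_poly by blast
  have "f = fls_shift (- fls_subdegree f) (fps_to_fls B)"
    unfolding B_def by (rule fls_conv_base_factor_to_fps_shift_subdegree)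
  then have "f = fls_X_intpow (fls_subdegree f) * lp_of_poly G"
    by (simp add: BG lp_of_poly_def fls_X_intpow_times_conv_shift)
  moreover have "f \<noteq> 0 \<Longrightarrow> Polynomial.coeff G 0 \<noteq> 0"
    using fls_base_factor_to_fps_base[of f] unfolding B_def[symmetric] BG by simp
  ultimately show ?thesis by blast
qed

lemma lpoly_iff: "f \<in> lpoly \<longleftrightarrow> (\<exists>k G. f = fls_X_intpow k * lp_of_poly G)"
proof
  assume "f \<in> lpoly"
  then show "\<exists>k G. f = fls_X_intpow k * lp_of_poly G" using lpoly_normal_form by blast
qed (auto simp: lpoly_X_intpow_mult lpoly_lp_of_poly)

lemma lpoly_mult:
  assumes "f \<in> lpoly" "g \<in> lpoly" shows "f * (g :: 'a::comm_ring_1 fls) \<in> lpoly"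
proof -
  obtain a F b G where f: "f = fls_X_intpow a * lp_of_poly F"
    and g: "g = fls_X_intpow b * lp_of_poly G" using assms unfolding lpoly_iff by blast
  have "f * g = (fls_X_intpow a * fls_X_intpow b) * lp_of_poly (F * G)"
    by (simp only: f g lp_of_poly_mult mult_ac)
  also have "\<dots> = fls_X_intpow (a + b) * lp_of_poly (F * G)"
    by (simp only: fls_X_intpow_times_fls_X_intpow)
  finally show ?thesis unfolding lpoly_iff by blast
qed

lemma lpoly_0: "0 \<in> lpoly"
  by (simp add: lpoly_def)

lemma lpoly_1: "(1 :: 'a::comm_ring_1 fls) \<in> lpoly"
  using lpoly_lp_of_poly[of 1] by simp

lemma lpoly_X_intpow: "(fls_X_intpow k :: 'a::comm_ring_1 fls) \<in> lpoly"
proof -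
  have "fls_X_intpow k = fls_X_intpow k * lp_of_poly (1 :: 'a poly)" by simp
  then show ?thesis unfolding lpoly_iff by blast
qed

lemma lpoly_const: "(fls_const c :: 'a::comm_ring_1 fls) \<in> lpoly"
  using lpoly_lp_of_poly[of "[:c:]"] by (simp add: lp_of_poly_const)

section \<open>Transfer of divisibility, units and irreducibility to polynomials\<close>

text \<open>A polynomial with nonzero constant term is coprime to t: t is prime and does not
  divide it.  Hence powers of t can be cancelled from divisibility statements.\<close>
lemma dvd_monom_mult_imp_dvd:
  fixes H :: "'a::field poly"
  assumes H0: "Polynomial.coeff H 0 \<noteq> 0" and "H dvd Polynomial.monom 1 M * G"
  shows "H dvd G"
  using assms(2)
proof (induction M arbitrary: G)
  case 0 then show ?case by simp
next
  case (Suc M)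
  then obtain Q where Q: "Polynomial.monom 1 (Suc M) * G = H * Q" by (elim dvdE)
  have X: "Polynomial.monom 1 (Suc M) = [:0, 1::'a:] * Polynomial.monom 1 M"
    by (simp add: x_as_monom mult_monom)
  have "prime_elem ([:0, 1:] :: 'a poly)" by (rule prime_elem_linear_field_poly) simp
  moreover have "\<not> [:0, 1:] dvd H" using H0 by (simp add: dvd_iff_poly_eq_0 poly_0_coeff_0)
  moreover have "[:0, 1:] dvd H * Q" unfolding Q[symmetric] X mult.assoc by (rule dvd_triv_left)
  ultimately obtain Q' where Q': "Q = [:0, 1:] * Q'" using prime_elem_dvd_mult_iff by blast
  have "[:0, 1::'a:] * (Polynomial.monom 1 M * G) = [:0, 1:] * (H * Q')"
    using Q unfolding X Q' by (simp add: mult_ac)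
  then have "H dvd Polynomial.monom 1 M * G" by simp
  then show ?case by (rule Suc.IH)
qed

lemma dvd_monom_mult_iff:
  fixes H :: "'a::field poly"
  assumes "Polynomial.coeff H 0 \<noteq> 0"
  shows "H dvd Polynomial.monom 1 M * G \<longleftrightarrow> H dvd G"
  by (blast intro: dvd_monom_mult_imp_dvd[OF assms] dvd_mult)

lemma lp_dvd_poly_iff:
  fixes H G :: "'a::field poly"
  assumes H0: "Polynomial.coeff H 0 \<noteq> 0"
  shows "lp_dvd (fls_X_intpow k * lp_of_poly H) (lp_of_poly G) \<longleftrightarrow> H dvd G"
proof
  assume "H dvd G"
  then obtain Q where Q: "G = H * Q" by blast
  have inverse: "fls_X_intpow k * fls_X_intpow (- k) = (1 :: 'a fls)"
    by (simp only: fls_X_intpow_times_fls_X_intpow) simp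
  have "(fls_X_intpow k * lp_of_poly H) * (fls_X_intpow (- k) * lp_of_poly Q)
      = (fls_X_intpow k * fls_X_intpow (- k)) * lp_of_poly (H * Q)"
    by (simp only: lp_of_poly_mult mult_ac)
  also have "\<dots> = lp_of_poly G" by (simp only: inverse mult_1_left Q)
  finally have "lp_of_poly G
      = (fls_X_intpow k * lp_of_poly H) * (fls_X_intpow (- k) * lp_of_poly Q)"
    by (rule sym)
  moreover have "fls_X_intpow (- k) * lp_of_poly Q \<in> lpoly"
    by (simp only: lpoly_X_intpow_mult lpoly_lp_of_poly)
  ultimately show "lp_dvd (fls_X_intpow k * lp_of_poly H) (lp_of_poly G)"
    unfolding lp_dvd_def by blast
next
  assume "lp_dvd (fls_X_intpow k * lp_of_poly H) (lp_of_poly G)"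
  then obtain q where "q \<in> lpoly" and q: "lp_of_poly G = fls_X_intpow k * lp_of_poly H * q"
    unfolding lp_dvd_def by blast
  then obtain j Q where j: "q = fls_X_intpow j * lp_of_poly Q" using lpoly_iff by blast
  have "fls_X_intpow (k + j) * lp_of_poly (H * Q)
      = (fls_X_intpow k * fls_X_intpow j) * lp_of_poly (H * Q)"
    by (simp only: fls_X_intpow_times_fls_X_intpow)
  also have "\<dots> = lp_of_poly G" by (simp only: q j lp_of_poly_mult mult_ac)
  finally have "Polynomial.monom 1 (nat (k + j)) * (H * Q)
      = Polynomial.monom 1 (nat (- (k + j))) * G"
    by (rule lp_of_poly_shift_eq)
  then have "Polynomial.monom 1 (nat (- (k + j))) * G
      = H * (Polynomial.monom 1 (nat (k + j)) * Q)"
    by (simp add: mult_ac)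
  then have "H dvd Polynomial.monom 1 (nat (- (k + j))) * G" by (rule dvdI)
  then show "H dvd G" by (simp add: dvd_monom_mult_iff[OF H0])
qed

lemma lp_unit_poly_iff:
  fixes A :: "'a::field poly"
  assumes "Polynomial.coeff A 0 \<noteq> 0"
  shows "lp_unit (fls_X_intpow k * lp_of_poly A) \<longleftrightarrow> is_unit A"
proof -
  have "lp_unit (fls_X_intpow k * lp_of_poly A)
      \<longleftrightarrow> lp_dvd (fls_X_intpow k * lp_of_poly A) (lp_of_poly 1)"
    by (auto simp: lp_unit_def lp_dvd_def lpoly_X_intpow_mult lpoly_lp_of_poly)
  then show ?thesis using lp_dvd_poly_iff[OF assms, of k 1] by simp
qed

lemma lp_breadth_normal_form:
  fixes H :: "'a::comm_ring_1 poly"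
  assumes H0: "Polynomial.coeff H 0 \<noteq> 0"
  shows "lp_breadth (fls_X_intpow k * lp_of_poly H) = int (degree H)"
proof -
  define S where "S = {n. (fls_X_intpow k * lp_of_poly H) $$ n \<noteq> 0}"
  have S: "n \<in> S \<longleftrightarrow> k \<le> n \<and> Polynomial.coeff H (nat (n - k)) \<noteq> 0" for n
    by (simp add: S_def fls_X_intpow_times_conv_shift lp_of_poly_nth)
  have "H \<noteq> 0" using H0 by auto
  have "fls_X_intpow k * lp_of_poly H \<in> lpoly"
    by (simp only: lpoly_X_intpow_mult lpoly_lp_of_poly)
  then have "finite S" by (simp add: lpoly_def S_def)
  have "Max S = k + int (degree H)"
  proof (rule Max_eqI[OF \<open>finite S\<close>])
    show "y \<le> k + int (degree H)" if "y \<in> S" for y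
      using that le_degree[of H "nat (y - k)"] by (auto simp: S)
    show "k + int (degree H) \<in> S" using \<open>H \<noteq> 0\<close> by (simp add: S)
  qed
  moreover have "Min S = k"
    by (rule Min_eqI[OF \<open>finite S\<close>]) (use H0 in \<open>auto simp: S\<close>)
  ultimately show ?thesis by (simp add: lp_breadth_def S_def)
qed

lemma lp_irreducible_normal_form:
  fixes h :: "'a::field fls"
  assumes irr: "lp_irreducible h"
  obtains k H where "h = fls_X_intpow k * lp_of_poly H" "Polynomial.coeff H 0 \<noteq> 0"
    "irreducible H" "lp_breadth h = int (degree H)"
proof -
  have "h \<in> lpoly" "h \<noteq> 0" "\<not> lp_unit h"
    using irr by (simp_all add: lp_irreducible_def)
  have split: "\<And>a b. a \<in> lpoly \<Longrightarrow> b \<in> lpoly \<Longrightarrow> h = a * b \<Longrightarrow> lp_unit a \<or> lp_unit b"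
    using irr unfolding lp_irreducible_def by blast
  obtain k H where h: "h = fls_X_intpow k * lp_of_poly H" and H0: "Polynomial.coeff H 0 \<noteq> 0"
    using lpoly_normal_form[OF \<open>h \<in> lpoly\<close>] \<open>h \<noteq> 0\<close> by blast
  have "irreducible H"
  proof (rule irreducibleI)
    show "H \<noteq> 0" using H0 by auto
    show "\<not> is_unit H" using \<open>\<not> lp_unit h\<close> unfolding h lp_unit_poly_iff[OF H0] .
    fix A B assume AB: "H = A * B"
    then have A0: "Polynomial.coeff A 0 \<noteq> 0" and B0: "Polynomial.coeff B 0 \<noteq> 0"
      using H0 by (auto simp: coeff_mult_0)
    have "h = (fls_X_intpow k * lp_of_poly A) * (fls_X_intpow 0 * lp_of_poly B)"
      by (simp add: h AB lp_of_poly_mult mult.assoc)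
    moreover have "fls_X_intpow k * lp_of_poly A \<in> lpoly" "fls_X_intpow 0 * lp_of_poly B \<in> lpoly"
      by (simp_all only: lpoly_X_intpow_mult lpoly_lp_of_poly)
    ultimately have
      "lp_unit (fls_X_intpow k * lp_of_poly A) \<or> lp_unit (fls_X_intpow 0 * lp_of_poly B)"
      using split by blast
    then show "is_unit A \<or> is_unit B"
      using lp_unit_poly_iff[OF A0, of k] lp_unit_poly_iff[OF B0, of 0] by blast
  qed
  moreover have "lp_breadth h = int (degree H)"
    unfolding h by (rule lp_breadth_normal_form[OF H0])
  ultimately show ?thesis by (rule that[OF h H0])
qed

lemma lp_dvd_of_assoc:
  assumes "lp_assoc h g" "g \<in> lpoly"
  shows "lp_dvd h (g :: 'a::field fls)"
proof -
  obtain a k where "a \<noteq> 0" and hk: "h = fls_const a * fls_X_intpow k * g"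
    using assms(1) unfolding lp_assoc_def by blast
  have inverse: "fls_X_intpow k * fls_X_intpow (- k) = (1 :: 'a fls)"
    by (simp only: fls_X_intpow_times_fls_X_intpow) simp
  have "h * (fls_const (1 / a) * fls_X_intpow (- k))
      = (fls_const a * fls_const (1 / a)) * (fls_X_intpow k * fls_X_intpow (- k)) * g"
    by (simp only: hk mult_ac)
  also have "\<dots> = g" using \<open>a \<noteq> 0\<close> by (simp only: inverse) simp
  finally have "g = h * (fls_const (1 / a) * fls_X_intpow (- k))" by (rule sym)
  moreover have "fls_const (1 / a) * fls_X_intpow (- k) \<in> lpoly"
    by (intro lpoly_mult lpoly_const lpoly_X_intpow)
  ultimately show ?thesis unfolding lp_dvd_def by blast
qed

lemma dvd_degree_le_smult:
  fixes H G :: "'a::field poly"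
  assumes "H dvd G" "G \<noteq> 0" "degree G \<le> degree H"
  obtains c where "c \<noteq> 0" "G = Polynomial.smult c H"
proof -
  obtain Q where Q: "G = H * Q" using assms(1) by blast
  then have "H \<noteq> 0" "Q \<noteq> 0" using assms(2) by auto
  then have "degree Q = 0" using assms(3) by (simp add: Q degree_mult_eq)
  define c where "c = Polynomial.coeff Q 0"
  have Qc: "Q = [:c:]" using \<open>degree Q = 0\<close> unfolding c_def by (simp add: degree_0_id)
  then have "c \<noteq> 0" using \<open>Q \<noteq> 0\<close> by auto
  moreover have "G = Polynomial.smult c H" using Q Qc by simp
  ultimately show ?thesis by (rule that)
qed

lemma qpow_closed_form:
  "qpow m a b = fls_X ^ m * a + (1 - fls_X ^ m) * (b :: 'a::comm_ring_1 fls)"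
proof (induction m)
  case 0 show ?case by (simp add: qpow_def)
next
  case (Suc m)
  have "qpow (Suc m) a b = qop (qpow m a b) b" by (simp add: qpow_def)
  then show ?case by (simp add: Suc qop_def algebra_simps)
qed

text \<open>Since a *^m b - a = (t^m - 1)(a - b), the identity *^m = *^0 holds on Lambda/(h)
  exactly when h divides t^m - 1.\<close>
lemma qpow_id_iff_lp_dvd:
  "qpow_id h m \<longleftrightarrow> lp_dvd h (fls_X ^ m - (1 :: 'a::comm_ring_1 fls))"
proof
  assume "qpow_id h m"
  then have "lp_cong h (qpow m 1 0) 1" unfolding qpow_id_def using lpoly_1 lpoly_0 by blast
  then show "lp_dvd h (fls_X ^ m - 1)" by (simp add: lp_cong_def qpow_closed_form)
next
  assume "lp_dvd h (fls_X ^ m - 1)"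
  then obtain q where "q \<in> lpoly" and q: "fls_X ^ m - 1 = h * q" unfolding lp_dvd_def by blast
  show "qpow_id h m" unfolding qpow_id_def lp_cong_def lp_dvd_def
  proof (intro ballI)
    fix a b :: "'a fls" assume "a \<in> lpoly" "b \<in> lpoly"
    have "qpow m a b - a = (fls_X ^ m - 1) * (a - b)"
      by (simp add: qpow_closed_form algebra_simps)
    then have "qpow m a b - a = h * (q * (a - b))" by (simp add: q mult.assoc)
    moreover have "q * (a - b) \<in> lpoly"
      using \<open>q \<in> lpoly\<close> \<open>a \<in> lpoly\<close> \<open>b \<in> lpoly\<close> by (intro lpoly_mult lpoly_diff)
    ultimately show "\<exists>q\<in>lpoly. qpow m a b - a = h * q" by blast
  qed
qed

lemma quandle_trivial_iff_qpow_id_1: "quandle_trivial h \<longleftrightarrow> qpow_id h 1"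
  by (simp add: quandle_trivial_def qpow_id_def qpow_def)

section \<open>The multiplicative order of t modulo a polynomial\<close>

text \<open>The least m >= 1 with t^m = 1 modulo H; for H(0) /= 0 over a finite field it exists and
  the exponents m with t^m = 1 modulo H are exactly its multiples (lemma ord_X).\<close>
definition ord_X :: "'a::field poly \<Rightarrow> nat" where
  "ord_X H = (LEAST m. 1 \<le> m \<and> H dvd Polynomial.monom 1 m - 1)"

lemma translation_invariant_dvd_iff:
  fixes P :: "nat \<Rightarrow> bool"
  assumes shift: "\<And>a b. P a \<Longrightarrow> P (a + b) \<longleftrightarrow> P b"
    and t: "1 \<le> t" "P t" and least: "\<And>m. 1 \<le> m \<Longrightarrow> P m \<Longrightarrow> t \<le> m"
  shows "P m \<longleftrightarrow> t dvd m"
proof -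
  have mult: "P (t * q + r) \<longleftrightarrow> P r" for q r
    by (induction q) (simp_all add: add.assoc shift[OF \<open>P t\<close>])
  have "P (m mod t) \<longleftrightarrow> P m" using mult[of "m div t" "m mod t"] by simp
  moreover have "m mod t < t" using t(1) by simp
  ultimately have "P m \<longleftrightarrow> m mod t = 0"
    using least[of "m mod t"] mult[of 0 0] shift[OF \<open>P t\<close>, of 0] t(2)
    by (cases "m mod t = 0") auto
  then show ?thesis by (simp add: dvd_eq_mod_eq_0)
qed

lemma dvd_monom_minus_1_shift:
  fixes H :: "'a::field poly"
  assumes H0: "Polynomial.coeff H 0 \<noteq> 0" and a: "H dvd Polynomial.monom 1 a - 1"
  shows "H dvd Polynomial.monom 1 (a + b) - 1 \<longleftrightarrow> H dvd Polynomial.monom 1 b - 1"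
proof -
  have split: "Polynomial.monom 1 (a + b) - 1
      = Polynomial.monom 1 a * (Polynomial.monom 1 b - 1) + (Polynomial.monom 1 a - (1 :: 'a poly))"
    by (simp add: mult_monom algebra_simps)
  have "H dvd Polynomial.monom 1 (a + b) - 1
      \<longleftrightarrow> H dvd Polynomial.monom 1 a * (Polynomial.monom 1 b - 1)"
    unfolding split by (rule dvd_add_left_iff[OF a])
  also have "\<dots> \<longleftrightarrow> H dvd Polynomial.monom 1 b - 1" by (rule dvd_monom_mult_iff[OF H0])
  finally show ?thesis .
qed

lemma finite_degree_le: "finite {r :: 'a::{zero,finite} poly. degree r \<le> n}"
proof -
  have "{r :: 'a poly. degree r \<le> n} \<subseteq> Poly ` {xs. set xs \<subseteq> UNIV \<and> length xs \<le> Suc n}"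
  proof
    fix r :: "'a poly" assume "r \<in> {r. degree r \<le> n}"
    then have "length (coeffs r) \<le> Suc n" by (cases "r = 0") (auto simp: length_coeffs_degree)
    then show "r \<in> Poly ` {xs. set xs \<subseteq> UNIV \<and> length xs \<le> Suc n}"
      by (intro image_eqI[of _ _ "coeffs r"]) auto
  qed
  then show ?thesis by (rule finite_subset) (intro finite_imageI finite_lists_length_le, simp)
qed

text \<open>Over a finite field some power t^m, m >= 1, is 1 modulo H: the residues of the powers
  of t repeat, and t is invertible modulo H.\<close>
lemma ex_dvd_monom_minus_1:
  fixes H :: "'a::{field,finite} poly"
  assumes H0: "Polynomial.coeff H 0 \<noteq> 0"
  shows "\<exists>m\<ge>1. H dvd Polynomial.monom 1 m - 1"
proof -
  define f where "f i = (Polynomial.monom 1 i :: 'a poly) mod H" for i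
  have "H \<noteq> 0" using H0 by auto
  then have "degree (f i) \<le> degree H" for i
    using degree_mod_less[OF \<open>H \<noteq> 0\<close>, of "Polynomial.monom 1 i"] unfolding f_def by auto
  then have "range f \<subseteq> {r. degree r \<le> degree H}" by auto
  then have "finite (range f)" using finite_degree_le by (rule finite_subset)
  then have "\<not> inj f" using finite_imageD infinite_UNIV_nat by blast
  then obtain i' j' where "i' \<noteq> j'" "f i' = f j'" unfolding inj_def by blast
  define i j where "i = min i' j'" and "j = max i' j'"
  have "i < j" "f i = f j"
    using \<open>i' \<noteq> j'\<close> \<open>f i' = f j'\<close> by (auto simp: i_def j_def min_def max_def)
  then have "H dvd Polynomial.monom 1 i - Polynomial.monom 1 j"
    by (simp add: f_def mod_eq_dvd_iff)
  then have "H dvd Polynomial.monom 1 j - Polynomial.monom 1 i"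
    using dvd_diff_commute by blast
  moreover have "Polynomial.monom 1 j - Polynomial.monom 1 i
      = Polynomial.monom 1 i * (Polynomial.monom 1 (j - i) - (1 :: 'a poly))"
    using \<open>i < j\<close> by (simp add: mult_monom right_diff_distrib)
  ultimately have "H dvd Polynomial.monom 1 (j - i) - 1"
    by (simp add: dvd_monom_mult_iff[OF H0])
  then show ?thesis using \<open>i < j\<close> by (intro exI[of _ "j - i"]) simp
qed

lemma ord_X:
  fixes H :: "'a::{field,finite} poly"
  assumes H0: "Polynomial.coeff H 0 \<noteq> 0"
  shows "1 \<le> ord_X H" and "H dvd Polynomial.monom 1 m - 1 \<longleftrightarrow> ord_X H dvd m"
proof -
  let ?P = "\<lambda>m. H dvd Polynomial.monom 1 m - 1"
  have least: "1 \<le> ord_X H \<and> ?P (ord_X H)"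
    unfolding ord_X_def by (rule LeastI_ex) (use ex_dvd_monom_minus_1[OF H0] in blast)
  then show "1 \<le> ord_X H" by simp
  show "?P m \<longleftrightarrow> ord_X H dvd m"
  proof (rule translation_invariant_dvd_iff)
    show "?P a \<Longrightarrow> ?P (a + b) \<longleftrightarrow> ?P b" for a b by (rule dvd_monom_minus_1_shift[OF H0])
    show "1 \<le> ord_X H" "?P (ord_X H)" using least by simp_all
    show "1 \<le> m \<Longrightarrow> ?P m \<Longrightarrow> ord_X H \<le> m" for m
      unfolding ord_X_def by (rule Least_le) simp
  qed
qed

section \<open>The polynomials p_m(t) = 1 + t + ... + t^(m-1)\<close>

lemma coeff_pm: "Polynomial.coeff (pm m :: 'a::comm_ring_1 poly) i = (if i < m then 1 else 0)"
  by (simp add: pm_def coeff_sum Polynomial.coeff_monom)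

lemma pm_Suc: "pm (Suc m) = pm m + (Polynomial.monom 1 m :: 'a::comm_ring_1 poly)"
  by (simp add: pm_def)

lemma X_minus_1_times_pm:
  "(Polynomial.monom 1 1 - 1) * pm m = (Polynomial.monom 1 m - 1 :: 'a::comm_ring_1 poly)"
  by (induction m) (simp_all add: pm_Suc pm_def[of 0] algebra_simps mult_monom)

lemma degree_pm:
  assumes "1 \<le> m" shows "degree (pm m :: 'a::comm_ring_1 poly) = m - 1"
proof (rule antisym)
  show "degree (pm m :: 'a poly) \<le> m - 1" by (rule degree_le) (auto simp: coeff_pm)
  show "m - 1 \<le> degree (pm m :: 'a poly)" by (rule le_degree) (use assms in \<open>simp add: coeff_pm\<close>)
qed

lemma pm_nonzero:
  assumes "1 \<le> m" shows "(pm m :: 'a::comm_ring_1 poly) \<noteq> 0"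
proof
  assume "(pm m :: 'a poly) = 0"
  then have "Polynomial.coeff (pm m :: 'a poly) 0 = 0" by simp
  with assms show False by (simp add: coeff_pm)
qed

lemma pm_add: "pm (a + b) = pm a + Polynomial.monom 1 a * (pm b :: 'a::comm_ring_1 poly)"
  by (induction b) (simp_all add: pm_Suc pm_def[of 0] algebra_simps mult_monom)

lemma pm_dvd_pm_mult: "pm a dvd (pm (a * b) :: 'a::comm_ring_1 poly)"
proof (induction b)
  case 0 show ?case by (simp add: pm_def)
next
  case (Suc b)
  have "a * Suc b = a * b + a" by simp
  then have "pm (a * Suc b) = pm (a * b) + Polynomial.monom 1 (a * b) * (pm a :: 'a poly)"
    using pm_add[of "a * b" a] by (simp only:)
  then show ?case using Suc by simp
qed

text \<open>p_m irreducible forces m prime, since p_d divides p_m for every divisor d of m.\<close>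
lemma prime_of_irreducible_pm:
  assumes irr: "irreducible (pm m :: 'a::field poly)" and m2: "2 \<le> m"
  shows "prime m"
  unfolding prime_nat_iff
proof (intro conjI allI impI)
  show "1 < m" using m2 by simp
  fix d assume "d dvd m"
  then obtain e where e: "m = d * e" by blast
  show "d = 1 \<or> d = m"
  proof (rule ccontr)
    assume nd: "\<not> (d = 1 \<or> d = m)"
    have "d \<noteq> 0" "e \<noteq> 0" using e m2 by (cases d; cases e; auto)+
    then have "2 \<le> d" "2 \<le> e" using nd e by (auto simp: numeral_2_eq_2 Suc_le_eq)
    then have d: "2 \<le> d" "d < m" using e by (auto intro: less_le_trans[OF _ mult_le_mono2])
    have "\<not> is_unit (pm d :: 'a poly)"
      using d degree_pm[where 'a='a, of d] pm_nonzero[where 'a='a, of d]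
      by (simp add: is_unit_iff_degree)
    moreover have "pm d dvd (pm m :: 'a poly)" using pm_dvd_pm_mult[of d e] e by simp
    ultimately have "pm m dvd (pm d :: 'a poly)"
      using irr unfolding irreducible_altdef by blast
    then have "degree (pm m :: 'a poly) \<le> degree (pm d :: 'a poly)"
      using pm_nonzero[where 'a='a, of d] d by (intro dvd_imp_degree_le) auto
    then show False using d degree_pm[where 'a='a, of m] degree_pm[where 'a='a, of d] by simp
  qed
qed

lemma irreducible_monic_int_poly:
  fixes C :: "int poly"
  assumes monic: "lead_coeff C = 1"
    and irr: "irreducible (of_int_poly C :: 'a::field poly)"
  shows "irreducible C"
proof (rule irreducibleI)
  have unit_of_reduction: "is_unit A" if "lead_coeff A = 1 \<or> lead_coeff A = -1"
      and "is_unit (of_int_poly A :: 'a poly)" for A :: "int poly"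
  proof -
    have "degree (of_int_poly A :: 'a poly) = degree A"
      by (rule map_poly_degree_eq) (use that(1) in auto)
    then have "degree A = 0" using that(2) by (simp add: is_unit_field_poly)
    then have "A = [:lead_coeff A:]" by (simp add: degree_0_id)
    moreover have "lead_coeff A dvd 1" using that(1) by auto
    ultimately show ?thesis by (metis is_unit_const_poly_iff)
  qed
  show "C \<noteq> 0" using monic by auto
  show "\<not> is_unit C"
  proof
    assume "is_unit C"
    then have "is_unit (of_int_poly C :: 'a poly)" by (rule of_int_poly_hom.hom_dvd_1)
    with irreducible_not_unit[OF irr] show False by contradiction
  qed
  fix A B assume AB: "C = A * B"
  then have "(of_int_poly C :: 'a poly) = of_int_poly A * of_int_poly B"
    by (simp add: of_int_poly_hom.hom_mult)
  then have "is_unit (of_int_poly A :: 'a poly) \<or> is_unit (of_int_poly B :: 'a poly)"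
    by (rule irreducibleD[OF irr])
  moreover have "lead_coeff A * lead_coeff B = 1" using monic AB by (simp add: lead_coeff_mult)
  then have "lead_coeff A = 1 \<or> lead_coeff A = -1" "lead_coeff B = 1 \<or> lead_coeff B = -1"
    by (auto simp: zmult_eq_1_iff)
  ultimately show "is_unit A \<or> is_unit B" using unit_of_reduction by blast
qed

lemma irreducible_int_pm:
  assumes "irreducible (pm m :: 'a::field poly)"
  shows "irreducible (pm m :: int poly)"
proof (rule irreducible_monic_int_poly)
  have "of_int_poly (pm m :: int poly) = (pm m :: 'a poly)"
    by (rule poly_eqI) (simp add: coeff_map_poly coeff_pm)
  then show "irreducible (of_int_poly (pm m :: int poly) :: 'a poly)" using assms by simp
  have "m \<noteq> 0"
  proof
    assume "m = 0"
    then have "(pm m :: 'a poly) = 0" by (simp add: pm_def)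
    with assms show False by simp
  qed
  then show "lead_coeff (pm m :: int poly) = 1" by (simp add: degree_pm coeff_pm)
qed

text \<open>Throughout, h = t^k H with H an irreducible polynomial over a finite field and
  H(0) /= 0; this is the normal form of any irreducible element of Lambda.\<close>
locale irreducible_modulus =
  fixes h :: "'a::{field,finite} fls" and k :: int and H :: "'a poly"
  assumes h_eq: "h = fls_X_intpow k * lp_of_poly H"
    and H0: "Polynomial.coeff H 0 \<noteq> 0"
    and H_irreducible: "irreducible H"
begin

lemma degree_H_pos: "1 \<le> degree H"
proof -
  have "H \<noteq> 0" using H0 by auto
  moreover have "\<not> is_unit H" using H_irreducible by (rule irreducible_not_unit)
  ultimately show ?thesis using is_unit_iff_degree[of H] by simp
qed

lemma lp_dvd_iff: "lp_dvd h (lp_of_poly G) \<longleftrightarrow> H dvd G"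
  unfolding h_eq by (rule lp_dvd_poly_iff[OF H0])

lemma qpow_id_iff: "qpow_id h m \<longleftrightarrow> H dvd Polynomial.monom 1 m - 1"
  by (simp add: qpow_id_iff_lp_dvd lp_of_poly_diff lp_of_poly_monom flip: lp_dvd_iff)

lemma quandle_type_eq: "quandle_type h = ord_X H"
  by (simp add: quandle_type_def ord_X_def qpow_id_iff)

lemma type_dvd_iff: "quandle_type h dvd m \<longleftrightarrow> qpow_id h m"
  by (simp add: quandle_type_eq qpow_id_iff ord_X(2)[OF H0])

lemma assoc_of_dvd:
  assumes "H dvd G" "G \<noteq> 0" "degree G \<le> degree H"
  shows "lp_assoc h (lp_of_poly G)"
proof -
  obtain c where "c \<noteq> 0" "G = Polynomial.smult c H"
    using dvd_degree_le_smult[OF assms] by blast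
  then have "H = Polynomial.smult (1 / c) G" by simp
  then have "h = fls_const (1 / c) * fls_X_intpow k * lp_of_poly G"
    by (simp only: h_eq lp_of_poly_smult mult_ac)
  moreover have "1 / c \<noteq> 0" using \<open>c \<noteq> 0\<close> by simp
  ultimately show ?thesis unfolding lp_assoc_def by blast
qed

lemma X_minus_1: "fls_X - 1 = lp_of_poly (Polynomial.monom 1 1 - 1 :: 'a poly)"
  by (simp add: lp_of_poly_diff lp_of_poly_monom)

lemma trivial_iff: "quandle_trivial h \<longleftrightarrow> lp_assoc h (fls_X - 1)"
proof
  have nz: "Polynomial.monom 1 1 - 1 \<noteq> (0 :: 'a poly)"
  proof
    assume "Polynomial.monom 1 1 - 1 = (0 :: 'a poly)"
    then have "Polynomial.coeff (Polynomial.monom 1 1 - 1 :: 'a poly) 1 = 0" by simp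
    then show False by simp
  qed
  have deg: "degree (Polynomial.monom 1 1 - 1 :: 'a poly) \<le> degree H"
    by (rule degree_diff_le) (use degree_H_pos in \<open>simp_all add: degree_monom_eq\<close>)
  assume "quandle_trivial h"
  then have "H dvd Polynomial.monom 1 1 - 1"
    by (simp only: quandle_trivial_iff_qpow_id_1 qpow_id_iff)
  from this nz deg show "lp_assoc h (fls_X - 1)"
    unfolding X_minus_1 by (rule assoc_of_dvd)
next
  assume "lp_assoc h (fls_X - 1)"
  then have "lp_dvd h (fls_X - 1)"
    using lpoly_lp_of_poly unfolding X_minus_1 by (blast intro: lp_dvd_of_assoc)
  then show "quandle_trivial h"
    unfolding X_minus_1 lp_dvd_iff quandle_trivial_iff_qpow_id_1 qpow_id_iff .
qed

text \<open>Claim (2): for a non-trivial quandle, t^m - 1 = (t - 1) p_m(t) and H is prime not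
  dividing t - 1.\<close>
lemma nontrivial_qpow_id_iff:
  assumes "\<not> quandle_trivial h"
  shows "qpow_id h m \<longleftrightarrow> H dvd pm m"
proof -
  have "\<not> H dvd Polynomial.monom 1 1 - 1"
    using assms unfolding quandle_trivial_iff_qpow_id_1 qpow_id_iff .
  moreover have "prime_elem H" using H_irreducible by (rule field_poly_irreducible_imp_prime)
  ultimately have "H dvd (Polynomial.monom 1 1 - 1) * pm m \<longleftrightarrow> H dvd pm m"
    using prime_elem_dvd_mult_iff by blast
  then show ?thesis by (simp only: qpow_id_iff X_minus_1_times_pm)
qed

text \<open>Claim (3): H_m = -(t^m - 1).\<close>
lemma Hm_dvd_iff: "lp_dvd h (Hm m) \<longleftrightarrow> quandle_type h dvd m"
proof -
  have "Hm m = - lp_of_poly (Polynomial.monom 1 m - 1 :: 'a poly)"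
    by (simp add: Hm_def lp_of_poly_diff lp_of_poly_monom)
  moreover have negate: "lp_dvd h (- f)" if dvd: "lp_dvd h f" for f
  proof -
    obtain q where "q \<in> lpoly" "f = h * q" using dvd unfolding lp_dvd_def by blast
    then have "- q \<in> lpoly" "- f = h * (- q)" by (simp_all add: lpoly_uminus)
    then show ?thesis unfolding lp_dvd_def by blast
  qed
  then have "lp_dvd h (- f) \<longleftrightarrow> lp_dvd h f" for f
    using negate[of "- f"] by auto
  ultimately show ?thesis by (simp add: lp_dvd_iff type_dvd_iff qpow_id_iff)
qed

text \<open>Claim (4), lower bound: H divides p_t, which has degree t - 1.\<close>
lemma type_lower_bound:
  assumes "\<not> quandle_trivial h"
  shows "degree H + 1 \<le> quandle_type h"
proof -
  have t1: "1 \<le> quandle_type h" using ord_X(1)[OF H0] by (simp add: quandle_type_eq)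
  have "H dvd pm (quandle_type h)"
    using type_dvd_iff[of "quandle_type h"] nontrivial_qpow_id_iff[OF assms] by simp
  then have "degree H \<le> degree (pm (quandle_type h) :: 'a poly)"
    using pm_nonzero[OF t1] by (rule dvd_imp_degree_le)
  then show ?thesis using degree_pm[where 'a='a, OF t1] t1 by simp
qed

text \<open>Claim (4), equality case: the bound is attained iff H divides p_(n+1), which has the
  same degree as H, i.e. iff p_(n+1) is a scalar multiple of H.\<close>
lemma type_minimal_iff:
  assumes nontrivial: "\<not> quandle_trivial h"
  shows "quandle_type h = degree H + 1 \<longleftrightarrow>
    irreducible (pm (degree H + 1) :: 'a poly) \<and> lp_assoc h (lp_of_poly (pm (degree H + 1)))"
    (is "_ \<longleftrightarrow> irreducible ?p \<and> _")
proof
  have deg: "degree ?p = degree H" and nz: "?p \<noteq> 0"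
    using degree_pm[of "degree H + 1"] pm_nonzero[of "degree H + 1"] by simp_all
  have "qpow_id h (quandle_type h)" using type_dvd_iff[of "quandle_type h"] by simp
  moreover assume "quandle_type h = degree H + 1"
  ultimately have dvd: "H dvd ?p"
    using nontrivial_qpow_id_iff[OF nontrivial] by simp
  have "degree ?p \<le> degree H" using deg by simp
  then obtain c where "c \<noteq> 0" and c: "?p = Polynomial.smult c H"
    using dvd_degree_le_smult[OF dvd nz] by blast
  have "irreducible (Polynomial.smult c H)"
    using H_irreducible \<open>c \<noteq> 0\<close> by simp
  then show "irreducible ?p \<and> lp_assoc h (lp_of_poly ?p)"
    using assoc_of_dvd[OF dvd nz \<open>degree ?p \<le> degree H\<close>] c by simp
next
  assume "irreducible ?p \<and> lp_assoc h (lp_of_poly ?p)"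
  then have "lp_dvd h (lp_of_poly ?p)"
    using lp_dvd_of_assoc lpoly_lp_of_poly by blast
  then have "quandle_type h dvd degree H + 1"
    by (simp add: lp_dvd_iff type_dvd_iff nontrivial_qpow_id_iff[OF nontrivial])
  then have "quandle_type h \<le> degree H + 1" by (rule dvd_imp_le) simp
  then show "quandle_type h = degree H + 1"
    using type_lower_bound[OF nontrivial] by simp
qed

end

theorem lemma2p1:
  fixes h :: "'p::prime_card mod_ring fls" and n :: nat
  assumes odd_p: "odd CARD('p)"
    and irr: "lp_irreducible h"
    and br: "lp_breadth h = int n" and n_pos: "n \<ge> 1"
  shows
    "(quandle_trivial h \<longleftrightarrow> lp_assoc h (fls_X - 1))
   \<and> (\<not> quandle_trivial h \<longrightarrow> (\<forall>m\<ge>1.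
          (qpow_id h m \<longleftrightarrow> lp_dvd h (lp_of_poly (pm m)))
        \<and> (quandle_type h dvd m \<longleftrightarrow> lp_dvd h (lp_of_poly (pm m)))))
   \<and> (\<forall>m\<ge>1. lp_dvd h (Hm m) \<longleftrightarrow> quandle_type h dvd m)
   \<and> (\<not> quandle_trivial h \<longrightarrow>
          quandle_type h \<ge> n + 1
        \<and> (quandle_type h = n + 1 \<longleftrightarrow>
             irreducible (pm (n + 1) :: 'p mod_ring poly)
             \<and> lp_assoc h (lp_of_poly (pm (n + 1))))
        \<and> (quandle_type h = n + 1 \<longrightarrow>
             irreducible (pm (n + 1) :: int poly) \<and> prime (n + 1)))"
proof -
  obtain k H where h: "h = fls_X_intpow k * lp_of_poly H" and H0: "Polynomial.coeff H 0 \<noteq> 0"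
    and H_irreducible: "irreducible H" and breadth: "lp_breadth h = int (degree H)"
    using lp_irreducible_normal_form[OF irr] by blast
  interpret irreducible_modulus h k H
    by (rule irreducible_modulus.intro) (rule h H0 H_irreducible)+
  have n: "degree H = n" using breadth br by simp
  have consequences: "irreducible (pm (n + 1) :: int poly) \<and> prime (n + 1)"
    if "\<not> quandle_trivial h" "quandle_type h = n + 1"
  proof -
    have irr_pm: "irreducible (pm (n + 1) :: 'p mod_ring poly)"
      using type_minimal_iff[OF that(1)] that(2) n by simp
    have "2 \<le> n + 1" using n_pos by simp
    then show ?thesis
      using irreducible_int_pm[OF irr_pm] prime_of_irreducible_pm[OF irr_pm] by blast
  qed
  show ?thesis
    using trivial_iff Hm_dvd_iff type_lower_bound type_minimal_iff consequences
    by (simp add: n nontrivial_qpow_id_iff type_dvd_iff lp_dvd_iff)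
qed

end
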